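(* Let $a\ge b\gg1$. Define \[ E_<:=\Big\{(x,y)\in\mathbb{R}^2:\tfrac{x^2}{a^2}+\tfrac{y^2}{b^2}\le1\Big\},\qquad E_>:=\Big\{(x,y)\in\mathbb{R}^2:\tfrac{x^2}{(a+100\frac ab)^2}+\tfrac{y^2}{(b+100)^2}\ge1\Big\}. \] Then no square of side length $1$ in $\mathbb{R}^2$ intersects both $E_<$ and $E_>$. The same holds with $E_<,E_>$ replaced by \[ E'_<:=\Big\{(x,y):\tfrac{x^2}{(a-100\frac ab)^2}+\tfrac{y^2}{(b-100)^2}\le1\Big\},\qquad E'_>:=\Big\{(x,y):\tfrac{x^2}{a^2}+\tfrac{y^2}{b^2}\ge1\Big\}. \]
   Context: "$b\gg1$" means $b\ge C$ for a sufficiently large absolute constant $C$. *)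

theory Defs
  imports Complex_Main
begin

definition unit_square :: "(real \<times> real) set \<Rightarrow> bool" where
  "unit_square S \<longleftrightarrow> (\<exists>p1 p2 c d. c\<^sup>2 + d\<^sup>2 = 1 \<and>
     S = {(p1 + s * c - t * d, p2 + s * d + t * c) | s t. 0 \<le> s \<and> s \<le> 1 \<and> 0 \<le> t \<and> t \<le> 1})"

definition ellipse_le :: "real \<Rightarrow> real \<Rightarrow> (real \<times> real) set" where
  "ellipse_le A B = {(x, y). x\<^sup>2 / A\<^sup>2 + y\<^sup>2 / B\<^sup>2 \<le> 1}"

definition ellipse_ge :: "real \<Rightarrow> real \<Rightarrow> (real \<times> real) set" where
  "ellipse_ge A B = {(x, y). x\<^sup>2 / A\<^sup>2 + y\<^sup>2 / B\<^sup>2 \<ge> 1}"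

end

theory Submission
  imports Defs
begin

text \<open>In the norm whose unit ball is the ellipse with semi-axes \<open>a \<ge> b\<close>, every vector is at
  most \<open>1/b\<close> times its Euclidean length, so the two points of a unit square (Euclidean distance
  at most \<open>\<surd>2\<close>) differ by at most \<open>\<surd>2/b\<close> in that norm. The ellipses in question are level
  sets of this norm at levels \<open>1\<close> and \<open>1 \<plusminus> 100/b\<close>, and \<open>\<surd>2 < 100\<close>.\<close>

definition ellipse_gauge :: "real \<Rightarrow> real \<Rightarrow> real \<Rightarrow> real \<Rightarrow> real" where
  "ellipse_gauge a b x y = cmod (Complex (x / a) (y / b))"

lemma ellipse_gauge_add:
  "ellipse_gauge a b (x + u) (y + v) \<le> ellipse_gauge a b x y + ellipse_gauge a b u v"
proof -
  have "Complex ((x + u) / a) ((y + v) / b) = Complex (x / a) (y / b) + Complex (u / a) (v / b)"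
    by (simp add: complex_eq_iff add_divide_distrib)
  then show ?thesis
    unfolding ellipse_gauge_def by (metis norm_triangle_ineq)
qed

lemma ellipse_gauge_le_norm:
  assumes "0 < b" "b \<le> a"
  shows "ellipse_gauge a b x y \<le> sqrt (x\<^sup>2 + y\<^sup>2) / b"
proof -
  have "(x / a)\<^sup>2 \<le> (x / b)\<^sup>2"
    using assms by (simp add: power_divide divide_left_mono)
  then have "(x / a)\<^sup>2 + (y / b)\<^sup>2 \<le> (sqrt (x\<^sup>2 + y\<^sup>2) / b)\<^sup>2"
    by (simp add: power_divide add_divide_distrib)
  then have "sqrt ((x / a)\<^sup>2 + (y / b)\<^sup>2) \<le> sqrt ((sqrt (x\<^sup>2 + y\<^sup>2) / b)\<^sup>2)"
    by (rule real_sqrt_le_mono)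
  then show ?thesis
    unfolding ellipse_gauge_def cmod_def using assms by simp
qed

lemma ellipse_gauge_squared: "(ellipse_gauge a b x y)\<^sup>2 = (x / a)\<^sup>2 + (y / b)\<^sup>2"
  unfolding ellipse_gauge_def cmod_def by simp

lemma scaled_ellipse_quotient:
  fixes x y a b \<mu> :: real
  shows "x\<^sup>2 / (\<mu> * a)\<^sup>2 + y\<^sup>2 / (\<mu> * b)\<^sup>2 = ((x / a)\<^sup>2 + (y / b)\<^sup>2) / \<mu>\<^sup>2"
  by (simp add: power_divide power_mult_distrib add_divide_distrib mult.commute)

lemma mem_ellipse_le_scaled_iff:
  assumes "0 < \<mu>"
  shows "(x, y) \<in> ellipse_le (\<mu> * a) (\<mu> * b) \<longleftrightarrow> ellipse_gauge a b x y \<le> \<mu>"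
proof -
  have "(x, y) \<in> ellipse_le (\<mu> * a) (\<mu> * b) \<longleftrightarrow> (ellipse_gauge a b x y)\<^sup>2 \<le> \<mu>\<^sup>2"
    using assms unfolding ellipse_le_def ellipse_gauge_squared scaled_ellipse_quotient
    by (simp add: divide_le_eq)
  also have "\<dots> \<longleftrightarrow> ellipse_gauge a b x y \<le> \<mu>"
    using assms by (simp add: ellipse_gauge_def power2_le_iff_abs_le)
  finally show ?thesis .
qed

lemma mem_ellipse_ge_scaled_iff:
  assumes "0 < \<nu>"
  shows "(x, y) \<in> ellipse_ge (\<nu> * a) (\<nu> * b) \<longleftrightarrow> \<nu> \<le> ellipse_gauge a b x y"
proof -
  have "(x, y) \<in> ellipse_ge (\<nu> * a) (\<nu> * b) \<longleftrightarrow> \<nu>\<^sup>2 \<le> (ellipse_gauge a b x y)\<^sup>2"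
    using assms unfolding ellipse_ge_def ellipse_gauge_squared scaled_ellipse_quotient
    by (simp add: le_divide_eq)
  also have "\<dots> \<longleftrightarrow> \<nu> \<le> ellipse_gauge a b x y"
    using assms by (simp add: ellipse_gauge_def power2_le_iff_abs_le)
  finally show ?thesis .
qed

lemma unit_square_dist_squared_le:
  assumes "unit_square S" "P \<in> S" "Q \<in> S"
  shows "(fst Q - fst P)\<^sup>2 + (snd Q - snd P)\<^sup>2 \<le> 2"
proof -
  obtain p1 p2 c d where cd: "c\<^sup>2 + d\<^sup>2 = 1" and S:
    "S = {(p1 + s * c - t * d, p2 + s * d + t * c) | s t. 0 \<le> s \<and> s \<le> 1 \<and> 0 \<le> t \<and> t \<le> 1}"
    using assms(1) unfolding unit_square_def by blast
  obtain s t where st: "0 \<le> s" "s \<le> 1" "0 \<le> t" "t \<le> 1"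
    and P: "P = (p1 + s * c - t * d, p2 + s * d + t * c)"
    using assms(2) S by blast
  obtain s' t' where st': "0 \<le> s'" "s' \<le> 1" "0 \<le> t'" "t' \<le> 1"
    and Q: "Q = (p1 + s' * c - t' * d, p2 + s' * d + t' * c)"
    using assms(3) S by blast
  have "(fst Q - fst P)\<^sup>2 + (snd Q - snd P)\<^sup>2 = ((s' - s)\<^sup>2 + (t' - t)\<^sup>2) * (c\<^sup>2 + d\<^sup>2)"
    unfolding P Q by (simp add: algebra_simps power2_eq_square)
  also have "\<dots> = (s' - s)\<^sup>2 + (t' - t)\<^sup>2"
    using cd by simp
  also have "\<dots> \<le> 1 + 1"
    using st st' by (intro add_mono) (simp_all add: abs_square_le_1)
  finally show ?thesis
    by simp
qed

lemma unit_square_not_meets_ellipse_levels: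
  assumes "0 < b" "b \<le> a" "0 < \<mu>" "\<mu> + sqrt 2 / b < \<nu>" "unit_square S"
  shows "\<not> (S \<inter> ellipse_le (\<mu> * a) (\<mu> * b) \<noteq> {} \<and> S \<inter> ellipse_ge (\<nu> * a) (\<nu> * b) \<noteq> {})"
proof
  assume "S \<inter> ellipse_le (\<mu> * a) (\<mu> * b) \<noteq> {} \<and> S \<inter> ellipse_ge (\<nu> * a) (\<nu> * b) \<noteq> {}"
  then obtain x y u v where P: "(x, y) \<in> S" "(x, y) \<in> ellipse_le (\<mu> * a) (\<mu> * b)"
    and Q: "(u, v) \<in> S" "(u, v) \<in> ellipse_ge (\<nu> * a) (\<nu> * b)"
    by auto
  have "0 < \<nu>"
    using assms by (smt (verit) divide_nonneg_pos real_sqrt_ge_zero)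
  then have "\<nu> \<le> ellipse_gauge a b u v"
    using Q(2) mem_ellipse_ge_scaled_iff by blast
  also have "\<dots> \<le> ellipse_gauge a b x y + ellipse_gauge a b (u - x) (v - y)"
    using ellipse_gauge_add[of a b x "u - x" y "v - y"] by simp
  also have "\<dots> \<le> \<mu> + sqrt 2 / b"
  proof (rule add_mono)
    show "ellipse_gauge a b x y \<le> \<mu>"
      using P(2) mem_ellipse_le_scaled_iff assms(3) by blast
    have "(u - x)\<^sup>2 + (v - y)\<^sup>2 \<le> 2"
      using unit_square_dist_squared_le[OF assms(5) P(1) Q(1)] by simp
    then have "sqrt ((u - x)\<^sup>2 + (v - y)\<^sup>2) / b \<le> sqrt 2 / b"
      using assms(1) by (simp add: divide_right_mono)
    then show "ellipse_gauge a b (u - x) (v - y) \<le> sqrt 2 / b"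
      using ellipse_gauge_le_norm[OF assms(1,2)] order_trans by blast
  qed
  finally show False
    using assms(4) by linarith
qed

theorem lemmaA3:
  shows "\<exists>C::real. \<forall>a b::real. C \<le> b \<and> b \<le> a \<longrightarrow>
    (\<forall>S. unit_square S \<longrightarrow>
       \<not> (S \<inter> ellipse_le a b \<noteq> {} \<and>
            S \<inter> ellipse_ge (a + 100 * a / b) (b + 100) \<noteq> {})) \<and>
    (\<forall>S. unit_square S \<longrightarrow>
       \<not> (S \<inter> ellipse_le (a - 100 * a / b) (b - 100) \<noteq> {} \<and>
            S \<inter> ellipse_ge a b \<noteq> {}))"
proof (intro exI[of _ 200] allI impI conjI)
  fix a b :: real and S
  assume ab: "200 \<le> b \<and> b \<le> a" and S: "unit_square S"
  then have b: "0 < b" "b \<le> a"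
    by auto
  have gap: "sqrt 2 / b < 100 / b"
    using b(1) real_less_lsqrt[of 100 2] by (simp add: divide_strict_right_mono)
  have "a + 100 * a / b = (1 + 100 / b) * a" "b + 100 = (1 + 100 / b) * b"
    using b by (simp_all add: field_simps)
  then show "\<not> (S \<inter> ellipse_le a b \<noteq> {} \<and> S \<inter> ellipse_ge (a + 100 * a / b) (b + 100) \<noteq> {})"
    using unit_square_not_meets_ellipse_levels[OF b, of 1 "1 + 100 / b"] S gap by simp
  have "a - 100 * a / b = (1 - 100 / b) * a" "b - 100 = (1 - 100 / b) * b"
    using b by (simp_all add: field_simps)
  moreover have "0 < 1 - 100 / b"
    using ab by simp
  ultimately show "\<not> (S \<inter> ellipse_le (a - 100 * a / b) (b - 100) \<noteq> {} \<and> S \<inter> ellipse_ge a b \<noteq> {})"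
    using unit_square_not_meets_ellipse_levels[OF b, of "1 - 100 / b" 1] S gap by simp
qed

end
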